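(* Let $q$ be a prime power and let $\mathrm{Aff}_q=\mathbb F_q\rtimes\mathbb F_q^*$ act on $\mathbb F_q$ by $(b,a)\circ x=ax+b$. For $c\in\mathbb F_q$ let $H_c=\{((1-a)c,a): a\in\mathbb F_q^*\}$ (the stabilizer of $c$), and let $\mathcal H=\{H_c: c\in\mathbb F_q\}$. Then the (quantum) query complexity of $\mathrm{HSSP}(\mathrm{Aff}_q,\mathbb F_q,\circ,\mathcal H)$ is $\Omega(q^{1/2})$.
   Context: Group actions: a left action $\circ$ of a finite group $G$ on a finite set $M$ is assumed faithful. For $H\le G$, $H\circ m=\{h\circ m:h\in H\}$ is the $H$-orbit of $m$; $H^*$ denotes the partition of $M$ into $H$-orbits. For a partition $\pi=\{\pi_1,\dots,\pi_\ell\}$ of $M$, $\pi^*=\{g\in G:\ g\circ\pi_i=\pi_i\ \forall i\}$. A subgroup $H$ is closed if $H=H^{**}$. The hidden symmetry subgroup problem $\mathrm{HSSP}(G,M,\circ,\mathcal H)$, for a family $\mathcal H$ of closed subgroups of $G$: given oracle access to a function $f:M\to S$ ($S$ a finite set) such that for some $H\in\mathcal H$ we have $f(x)=f(y)\iff H\circ x=H\circ y$ (we say $f$ hides $H$ by symmetries), output $H$. Query complexity counts the number of oracle queries. *)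

theory Defs
  imports Complex_Main "HOL-Algebra.Ring"
begin

definition orbit_of :: "('g \<Rightarrow> 'm \<Rightarrow> 'm) \<Rightarrow> 'g set \<Rightarrow> 'm \<Rightarrow> 'm set" where
  "orbit_of act H m = (\<lambda>h. act h m) ` H"

definition hides_by_symmetries ::
  "('g \<Rightarrow> 'm \<Rightarrow> 'm) \<Rightarrow> 'm set \<Rightarrow> 'g set \<Rightarrow> ('m \<Rightarrow> 's) \<Rightarrow> bool" where
  "hides_by_symmetries act M H f \<longleftrightarrow>
     (\<forall>x\<in>M. \<forall>y\<in>M. f x = f y \<longleftrightarrow> orbit_of act H x = orbit_of act H y)"

definition aff_carrier :: "('a, 'b) ring_scheme \<Rightarrow> ('a \<times> 'a) set" where
  "aff_carrier R = carrier R \<times> (carrier R - {\<zero>\<^bsub>R\<^esub>})"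

definition aff_act :: "('a, 'b) ring_scheme \<Rightarrow> 'a \<times> 'a \<Rightarrow> 'a \<Rightarrow> 'a" where
  "aff_act R g x = (snd g \<otimes>\<^bsub>R\<^esub> x) \<oplus>\<^bsub>R\<^esub> fst g"

definition stab_subgroup :: "('a, 'b) ring_scheme \<Rightarrow> 'a \<Rightarrow> ('a \<times> 'a) set" where
  "stab_subgroup R c =
     {((\<one>\<^bsub>R\<^esub> \<ominus>\<^bsub>R\<^esub> a) \<otimes>\<^bsub>R\<^esub> c, a) | a. a \<in> carrier R - {\<zero>\<^bsub>R\<^esub>}}"

definition stab_family :: "('a, 'b) ring_scheme \<Rightarrow> ('a \<times> 'a) set set" where
  "stab_family R = stab_subgroup R ` carrier R"

definition apply_op :: "'b set \<Rightarrow> ('b \<Rightarrow> 'b \<Rightarrow> complex) \<Rightarrow> ('b \<Rightarrow> complex) \<Rightarrow> ('b \<Rightarrow> complex)" where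
  "apply_op B U \<psi> = (\<lambda>i. \<Sum>j\<in>B. U i j * \<psi> j)"

definition unitary_on :: "'b set \<Rightarrow> ('b \<Rightarrow> 'b \<Rightarrow> complex) \<Rightarrow> bool" where
  "unitary_on B U \<longleftrightarrow>
     (\<forall>i\<in>B. \<forall>j\<in>B. (\<Sum>k\<in>B. U i k * cnj (U j k)) = (if i = j then 1 else 0))"

text \<open>Basis |x, y, w>: query register x in M, answer register y in Z_m, workspace w < d.\<close>
definition query_basis :: "'m set \<Rightarrow> nat \<Rightarrow> nat \<Rightarrow> ('m \<times> nat \<times> nat) set" where
  "query_basis M m d = M \<times> {..<m} \<times> {..<d}"

text \<open>Standard oracle O_f |x, y, w> = |x, (y + f x) mod m, w>, as a matrix.\<close>
definition oracle_mat :: "nat \<Rightarrow> ('m \<Rightarrow> nat) \<Rightarrow> ('m \<times> nat \<times> nat) \<Rightarrow> ('m \<times> nat \<times> nat) \<Rightarrow> complex" where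
  "oracle_mat m f i j =
     (if fst i = fst j \<and> snd (snd i) = snd (snd j) \<and> fst (snd i) = (fst (snd j) + f (fst j)) mod m
      then 1 else 0)"

text \<open>State after k queries: U_k O U_{k-1} ... O U_0 psi0.\<close>
fun run_alg :: "'b set \<Rightarrow> (nat \<Rightarrow> 'b \<Rightarrow> 'b \<Rightarrow> complex) \<Rightarrow> ('b \<Rightarrow> 'b \<Rightarrow> complex)
                 \<Rightarrow> ('b \<Rightarrow> complex) \<Rightarrow> nat \<Rightarrow> ('b \<Rightarrow> complex)" where
  "run_alg B U Orc \<psi>0 0 = apply_op B (U 0) \<psi>0"
| "run_alg B U Orc \<psi>0 (Suc k) = apply_op B (U (Suc k)) (apply_op B Orc (run_alg B U Orc \<psi>0 k))"

definition success_prob :: "'b set \<Rightarrow> ('b \<Rightarrow> 'h) \<Rightarrow> 'h \<Rightarrow> ('b \<Rightarrow> complex) \<Rightarrow> real" where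
  "success_prob B out H \<psi> = (\<Sum>b\<in>{b\<in>B. out b = H}. (cmod (\<psi> b))\<^sup>2)"

definition solves_hssp_quantum ::
  "('g \<Rightarrow> 'm \<Rightarrow> 'm) \<Rightarrow> 'm set \<Rightarrow> 'g set set \<Rightarrow> nat \<Rightarrow> nat \<Rightarrow> bool" where
  "solves_hssp_quantum act M Hs m T \<longleftrightarrow>
     (\<exists>(d::nat) (U :: nat \<Rightarrow> ('m \<times> nat \<times> nat) \<Rightarrow> ('m \<times> nat \<times> nat) \<Rightarrow> complex)
        (\<psi>0 :: ('m \<times> nat \<times> nat) \<Rightarrow> complex) (out :: ('m \<times> nat \<times> nat) \<Rightarrow> 'g set).
        (\<forall>k\<le>T. unitary_on (query_basis M m d) (U k)) \<and>
        (\<Sum>b\<in>query_basis M m d. (cmod (\<psi>0 b))\<^sup>2) = 1 \<and>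
        (\<forall>H\<in>Hs. \<forall>f :: 'm \<Rightarrow> nat. (\<forall>x\<in>M. f x < m) \<longrightarrow> hides_by_symmetries act M H f \<longrightarrow>
            success_prob (query_basis M m d) out H
              (run_alg (query_basis M m d) U (oracle_mat m f) \<psi>0 T) \<ge> 2/3))"

end

theory Submission
  imports Defs "HOL-Algebra.Multiplicative_Group" "HOL-Analysis.L2_Norm" "HOL-Analysis.Convex"
begin

text \<open>
  For \<open>c \<in> F_q\<close> the indicator function of \<open>{c}\<close> hides the stabiliser \<open>H_c\<close>, because the
  \<open>H_c\<close>-orbits are \<open>{c}\<close> and \<open>F_q - {c}\<close>.  Run a \<open>T\<close>-query algorithm with the all-zero oracle,
  which acts as the identity, obtaining states \<open>\<phi>_0, ..., \<phi>_T\<close>.  Replacing the oracle by the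
  indicator of \<open>c\<close> moves the final state by at most \<open>\<Sum>_k \<parallel>O_c \<phi>_k - \<phi>_k\<parallel>\<close>, and each term is
  bounded by twice the square root of the weight \<open>w_c(k)\<close> that \<open>\<phi>_k\<close> puts on query \<open>c\<close>; by
  Cauchy-Schwarz the squared distance is at most \<open>4T \<Sum>_k w_c(k)\<close>.  Since the algorithm
  identifies \<open>H_c\<close> with probability \<open>2/3\<close>, either this distance is large or \<open>\<phi>_T\<close> already
  outputs \<open>H_c\<close> with noticeable probability.  Summing over the \<open>q\<close> points, using
  \<open>\<Sum>_c w_c(k) \<le> 1\<close> and that distinct \<open>c\<close> give disjoint outcome sets, yields
  \<open>2q/3 \<le> 8T\<^sup>2 + 2\<close>, hence \<open>T \<ge> \<surd>q / 5\<close> for \<open>q \<ge> 6\<close>.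
\<close>

definition state_norm :: "'b set \<Rightarrow> ('b \<Rightarrow> complex) \<Rightarrow> real" where
  "state_norm B \<psi> = L2_set (\<lambda>b. cmod (\<psi> b)) B"

definition cinner :: "'b set \<Rightarrow> ('b \<Rightarrow> complex) \<Rightarrow> ('b \<Rightarrow> complex) \<Rightarrow> complex" where
  "cinner B \<phi> \<chi> = (\<Sum>b\<in>B. \<phi> b * cnj (\<chi> b))"

definition apply_adj :: "'b set \<Rightarrow> ('b \<Rightarrow> 'b \<Rightarrow> complex) \<Rightarrow> ('b \<Rightarrow> complex) \<Rightarrow> ('b \<Rightarrow> complex)" where
  "apply_adj B U \<chi> = (\<lambda>j. \<Sum>i\<in>B. cnj (U i j) * \<chi> i)"

definition contraction_on :: "'b set \<Rightarrow> ('b \<Rightarrow> 'b \<Rightarrow> complex) \<Rightarrow> bool" where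
  "contraction_on B U \<longleftrightarrow> (\<forall>\<psi>. state_norm B (apply_op B U \<psi>) \<le> state_norm B \<psi>)"

lemma state_norm_sq: "(state_norm B \<psi>)\<^sup>2 = (\<Sum>b\<in>B. (cmod (\<psi> b))\<^sup>2)"
  unfolding state_norm_def L2_set_def by (simp add: sum_nonneg)

lemma state_norm_nonneg: "0 \<le> state_norm B \<psi>"
  unfolding state_norm_def by simp

lemma cinner_self: "cinner B \<psi> \<psi> = complex_of_real ((state_norm B \<psi>)\<^sup>2)"
  unfolding cinner_def state_norm_sq of_real_sum complex_norm_square ..

lemma state_norm_le_iff_sq: "state_norm B \<phi> \<le> state_norm B \<chi> \<longleftrightarrow> (state_norm B \<phi>)\<^sup>2 \<le> (state_norm B \<chi>)\<^sup>2"
  using state_norm_nonneg by (metis abs_le_square_iff abs_of_nonneg)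

lemma state_norm_triangle: "state_norm B (\<lambda>b. \<phi> b + \<chi> b) \<le> state_norm B \<phi> + state_norm B \<chi>"
proof -
  have "state_norm B (\<lambda>b. \<phi> b + \<chi> b) \<le> L2_set (\<lambda>b. cmod (\<phi> b) + cmod (\<chi> b)) B"
    unfolding state_norm_def by (rule L2_set_mono) (auto simp: norm_triangle_ineq)
  also have "\<dots> \<le> state_norm B \<phi> + state_norm B \<chi>"
    unfolding state_norm_def by (rule L2_set_triangle_ineq)
  finally show ?thesis .
qed

lemma state_norm_cong: "(\<And>b. b \<in> B \<Longrightarrow> \<phi> b = \<chi> b) \<Longrightarrow> state_norm B \<phi> = state_norm B \<chi>"
  unfolding state_norm_def by (rule L2_set_cong) auto

lemma apply_op_diff: "apply_op B U (\<lambda>b. \<phi> b - \<chi> b) = (\<lambda>i. apply_op B U \<phi> i - apply_op B U \<chi> i)"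
  by (simp add: apply_op_def algebra_simps sum_subtractf)

lemma cinner_adj: "cinner B \<psi> (apply_adj B U \<chi>) = cinner B (apply_op B U \<psi>) \<chi>"
proof -
  have "cinner B \<psi> (apply_adj B U \<chi>) = (\<Sum>j\<in>B. \<Sum>i\<in>B. U i j * \<psi> j * cnj (\<chi> i))"
    by (simp add: cinner_def apply_adj_def sum_distrib_left algebra_simps)
  also have "\<dots> = (\<Sum>i\<in>B. \<Sum>j\<in>B. U i j * \<psi> j * cnj (\<chi> i))"
    by (rule sum.swap)
  finally show ?thesis
    by (simp add: cinner_def apply_op_def sum_distrib_right)
qed

text \<open>Orthonormality of the rows of \<open>U\<close> says exactly \<open>U U\<^sup>* = 1\<close>.\<close>
lemma unitary_right_inverse:
  assumes "finite B" "unitary_on B U" "i \<in> B"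
  shows "apply_op B U (apply_adj B U \<chi>) i = \<chi> i"
proof -
  have "apply_op B U (apply_adj B U \<chi>) i = (\<Sum>j\<in>B. \<Sum>k\<in>B. U i j * cnj (U k j) * \<chi> k)"
    by (simp add: apply_op_def apply_adj_def sum_distrib_left mult.assoc)
  also have "\<dots> = (\<Sum>k\<in>B. \<Sum>j\<in>B. U i j * cnj (U k j) * \<chi> k)"
    by (rule sum.swap)
  also have "\<dots> = (\<Sum>k\<in>B. (\<Sum>j\<in>B. U i j * cnj (U k j)) * \<chi> k)"
    by (simp add: sum_distrib_right)
  also have "\<dots> = (\<Sum>k\<in>B. (if i = k then \<chi> k else 0))"
    using assms(2,3) unfolding unitary_on_def by (intro sum.cong) auto
  finally show ?thesis using assms(1,3) by simp
qed

lemma cinner_diff_self: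
  "cinner B (\<lambda>b. \<phi> b - \<chi> b) (\<lambda>b. \<phi> b - \<chi> b)
     = cinner B \<phi> \<phi> - cinner B \<phi> \<chi> - cnj (cinner B \<phi> \<chi>) + cinner B \<chi> \<chi>"
  by (simp add: cinner_def algebra_simps sum.distrib sum_subtractf)

text \<open>Bessel's inequality: with \<open>c = U\<psi>\<close> and \<open>e = U\<^sup>* c\<close> one gets
  \<open>0 \<le> \<parallel>\<psi> - e\<parallel>\<^sup>2 = \<parallel>\<psi>\<parallel>\<^sup>2 - \<parallel>c\<parallel>\<^sup>2\<close>, so unitaries do not increase norms.\<close>
lemma unitary_contraction:
  assumes fin: "finite B" and U: "unitary_on B U"
  shows "contraction_on B U"
  unfolding contraction_on_def
proof
  fix \<psi>
  define c where "c = apply_op B U \<psi>"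
  define e where "e = apply_adj B U c"
  have Ue: "apply_op B U e i = c i" if "i \<in> B" for i
    unfolding e_def using unitary_right_inverse[OF fin U that] .
  have \<psi>e: "cinner B \<psi> e = complex_of_real ((state_norm B c)\<^sup>2)"
    unfolding e_def cinner_adj c_def[symmetric] cinner_self ..
  have "cinner B e e = cinner B (apply_op B U e) c"
    unfolding e_def cinner_adj ..
  also have "\<dots> = cinner B c c"
    unfolding cinner_def using Ue by (intro sum.cong) auto
  finally have ee: "cinner B e e = complex_of_real ((state_norm B c)\<^sup>2)"
    unfolding cinner_self .
  have "complex_of_real ((state_norm B (\<lambda>b. \<psi> b - e b))\<^sup>2)
      = complex_of_real ((state_norm B \<psi>)\<^sup>2 - (state_norm B c)\<^sup>2)"
    unfolding cinner_self[symmetric] cinner_diff_self \<psi>e ee by (simp add: cinner_self)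
  then have "(state_norm B (\<lambda>b. \<psi> b - e b))\<^sup>2 = (state_norm B \<psi>)\<^sup>2 - (state_norm B c)\<^sup>2"
    using of_real_eq_iff by blast
  then show "state_norm B c \<le> state_norm B \<psi>"
    using state_norm_le_iff_sq by (metis diff_ge_0_iff_ge zero_le_power2)
qed

text \<open>The standard oracle sends \<open>|x, y, w\<rangle>\<close> to \<open>|x, y + f x mod m, w\<rangle>\<close>; \<open>oracle_unstep\<close>
  undoes this step, so that \<open>(O_f \<psi>)(i) = \<psi> (oracle_unstep m f i)\<close>.\<close>
definition oracle_step :: "nat \<Rightarrow> ('m \<Rightarrow> nat) \<Rightarrow> 'm \<times> nat \<times> nat \<Rightarrow> 'm \<times> nat \<times> nat" where
  "oracle_step m f j = (fst j, (fst (snd j) + f (fst j)) mod m, snd (snd j))"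

definition oracle_unstep :: "nat \<Rightarrow> ('m \<Rightarrow> nat) \<Rightarrow> 'm \<times> nat \<times> nat \<Rightarrow> 'm \<times> nat \<times> nat" where
  "oracle_unstep m f i = (fst i, (fst (snd i) + (m - f (fst i))) mod m, snd (snd i))"

text \<open>The query weight of a state on a set \<open>S\<close> of queries: the probability that measuring
  the query register yields an element of \<open>S\<close>.\<close>
definition query_weight :: "('m \<times> nat \<times> nat) set \<Rightarrow> 'm set \<Rightarrow> ('m \<times> nat \<times> nat \<Rightarrow> complex) \<Rightarrow> real" where
  "query_weight B S \<psi> = (\<Sum>b\<in>{b\<in>B. fst b \<in> S}. (cmod (\<psi> b))\<^sup>2)"

lemma oracle_mat_eq: "oracle_mat m f i j = (if i = oracle_step m f j then 1 else 0)"
  by (cases i; cases j) (auto simp: oracle_mat_def oracle_step_def)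

lemma mod_shift_cancel:
  assumes "a \<le> (m::nat)" "y < m"
  shows "((y + a) mod m + (m - a)) mod m = y"
proof -
  have "((y + a) mod m + (m - a)) mod m = (y + a + (m - a)) mod m"
    by (rule mod_add_left_eq)
  also have "y + a + (m - a) = y + m"
    using assms(1) by simp
  finally show ?thesis
    using assms(2) by simp
qed

lemma oracle_step_unstep:
  assumes "i \<in> query_basis M m d" "\<forall>x\<in>M. f x < m"
  shows "oracle_step m f (oracle_unstep m f i) = i"
  using assms mod_shift_cancel[of "m - f (fst i)" m "fst (snd i)"]
  by (cases i) (auto simp: oracle_step_def oracle_unstep_def query_basis_def)

lemma oracle_unstep_step:
  assumes "j \<in> query_basis M m d" "\<forall>x\<in>M. f x < m"
  shows "oracle_unstep m f (oracle_step m f j) = j"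
  using assms mod_shift_cancel[of "f (fst j)" m "fst (snd j)"]
  by (cases j) (auto simp: oracle_step_def oracle_unstep_def query_basis_def)

lemma oracle_unstep_in: "i \<in> query_basis M m d \<Longrightarrow> oracle_unstep m f i \<in> query_basis M m d"
  by (auto simp: oracle_unstep_def query_basis_def)

lemma oracle_unstep_fixed: "i \<in> query_basis M m d \<Longrightarrow> f (fst i) = 0 \<Longrightarrow> oracle_unstep m f i = i"
  by (cases i) (auto simp: oracle_unstep_def query_basis_def)

lemma oracle_unstep_bij:
  assumes "finite M" "\<forall>x\<in>M. f x < m"
  shows "bij_betw (oracle_unstep m f) (query_basis M m d) (query_basis M m d)"
proof -
  have "inj_on (oracle_unstep m f) (query_basis M m d)"
    using oracle_step_unstep[OF _ assms(2)] by (metis inj_onI)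
  moreover have "finite (query_basis M m d)"
    using assms(1) by (simp add: query_basis_def)
  moreover have "oracle_unstep m f ` query_basis M m d \<subseteq> query_basis M m d"
    using oracle_unstep_in by blast
  ultimately show ?thesis
    by (simp add: bij_betw_def endo_inj_surj)
qed

lemma oracle_apply:
  assumes "i \<in> query_basis M m d" "\<forall>x\<in>M. f x < m" "finite M"
  shows "apply_op (query_basis M m d) (oracle_mat m f) \<psi> i = \<psi> (oracle_unstep m f i)"
proof -
  let ?B = "query_basis M m d"
  have "i = oracle_step m f j \<longleftrightarrow> j = oracle_unstep m f i" if "j \<in> ?B" for j
    using oracle_step_unstep[OF assms(1,2)] oracle_unstep_step[OF that assms(2)] by metis
  then have "apply_op ?B (oracle_mat m f) \<psi> i = (\<Sum>j\<in>?B. if j = oracle_unstep m f i then \<psi> j else 0)"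
    unfolding apply_op_def oracle_mat_eq by (intro sum.cong) auto
  also have "\<dots> = \<psi> (oracle_unstep m f i)"
    using oracle_unstep_in[OF assms(1)] assms(3) by (simp add: query_basis_def)
  finally show ?thesis .
qed

text \<open>Being a permutation, the oracle preserves norms.\<close>
lemma oracle_contraction:
  assumes "finite M" "\<forall>x\<in>M. f x < m"
  shows "contraction_on (query_basis M m d) (oracle_mat m f)"
  unfolding contraction_on_def
proof
  fix \<psi>
  let ?B = "query_basis M m d"
  have "state_norm ?B (apply_op ?B (oracle_mat m f) \<psi>) = state_norm ?B (\<lambda>b. \<psi> (oracle_unstep m f b))"
    using oracle_apply[OF _ assms(2,1)] by (rule state_norm_cong)
  also have "\<dots> = state_norm ?B \<psi>"
    unfolding state_norm_def L2_set_def
    using sum.reindex_bij_betw[OF oracle_unstep_bij[OF assms], of "\<lambda>b. (cmod (\<psi> b))\<^sup>2"] by simp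
  finally show "state_norm ?B (apply_op ?B (oracle_mat m f) \<psi>) \<le> state_norm ?B \<psi>" by simp
qed

lemma cmod_diff_sq_le: "(cmod (a - b))\<^sup>2 \<le> 2 * (cmod a)\<^sup>2 + 2 * (cmod b)\<^sup>2"
proof -
  have "(cmod (a - b))\<^sup>2 \<le> (cmod a + cmod b)\<^sup>2"
    by (simp add: power_mono norm_triangle_ineq4)
  also have "\<dots> \<le> 2 * (cmod a)\<^sup>2 + 2 * (cmod b)\<^sup>2"
    using zero_le_power2[of "cmod a - cmod b"] unfolding power2_diff power2_sum by linarith
  finally show ?thesis .
qed

text \<open>The oracle only moves amplitude on queries \<open>x\<close> with \<open>f x \<noteq> 0\<close>, and there only within
  the fibre of \<open>x\<close>; hence the displacement is controlled by the query weight on the support of \<open>f\<close>.\<close>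
lemma oracle_displacement:
  assumes fin: "finite M" and fm: "\<forall>x\<in>M. f x < m"
  shows "(state_norm (query_basis M m d) (\<lambda>b. apply_op (query_basis M m d) (oracle_mat m f) \<phi> b - \<phi> b))\<^sup>2
           \<le> 4 * query_weight (query_basis M m d) {x. f x \<noteq> 0} \<phi>"
proof -
  let ?B = "query_basis M m d" and ?g = "oracle_unstep m f"
  define S where "S = {b\<in>?B. fst b \<in> {x. f x \<noteq> 0}}"
  have finB: "finite ?B" using fin by (simp add: query_basis_def)
  have SB: "S \<subseteq> ?B" by (auto simp: S_def)
  have gS: "?g ` S \<subseteq> S"
    using oracle_unstep_in by (auto simp: S_def oracle_unstep_def)
  have "(state_norm ?B (\<lambda>b. apply_op ?B (oracle_mat m f) \<phi> b - \<phi> b))\<^sup>2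
      = (\<Sum>b\<in>?B. (cmod (\<phi> (?g b) - \<phi> b))\<^sup>2)"
    unfolding state_norm_sq using oracle_apply[OF _ fm fin] by (intro sum.cong) simp_all
  also have "\<dots> = (\<Sum>b\<in>S. (cmod (\<phi> (?g b) - \<phi> b))\<^sup>2)"
  proof (intro sum.mono_neutral_right[OF finB SB] ballI)
    fix b assume "b \<in> ?B - S"
    then have "?g b = b" using oracle_unstep_fixed[of b M m d f] by (simp add: S_def)
    then show "(cmod (\<phi> (?g b) - \<phi> b))\<^sup>2 = 0" by simp
  qed
  also have "\<dots> \<le> (\<Sum>b\<in>S. 2 * (cmod (\<phi> (?g b)))\<^sup>2 + 2 * (cmod (\<phi> b))\<^sup>2)"
    by (intro sum_mono cmod_diff_sq_le)
  also have "\<dots> = 2 * (\<Sum>b\<in>?g ` S. (cmod (\<phi> b))\<^sup>2) + 2 * query_weight ?B {x. f x \<noteq> 0} \<phi>"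
    using inj_on_subset[OF bij_betw_imp_inj_on[OF oracle_unstep_bij[OF fin fm]] SB]
    by (simp add: sum.distrib sum.reindex sum_distrib_left query_weight_def S_def)
  also have "(\<Sum>b\<in>?g ` S. (cmod (\<phi> b))\<^sup>2) \<le> query_weight ?B {x. f x \<noteq> 0} \<phi>"
    unfolding query_weight_def S_def[symmetric]
    using finite_subset[OF SB finB] gS by (intro sum_mono2) auto
  finally show ?thesis by simp
qed

lemma query_weight_sum:
  assumes "finite M"
  shows "(\<Sum>c\<in>M. query_weight (query_basis M m d) {c} \<psi>) = (state_norm (query_basis M m d) \<psi>)\<^sup>2"
proof -
  have "finite (query_basis M m d)" "fst ` query_basis M m d \<subseteq> M"
    using assms by (auto simp: query_basis_def)
  then show ?thesis
    unfolding query_weight_def state_norm_sq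
    using sum.group[OF _ assms, of "query_basis M m d" fst "\<lambda>b. (cmod (\<psi> b))\<^sup>2"] by simp
qed

lemma run_alg_norm:
  assumes U: "\<forall>k\<le>T. contraction_on B (U k)" and contr: "contraction_on B Orc" and "k \<le> T"
  shows "state_norm B (run_alg B U Orc \<psi>0 k) \<le> state_norm B \<psi>0"
  using assms(3)
proof (induction k)
  case 0
  then show ?case using U by (simp add: contraction_on_def)
next
  case (Suc k)
  have "state_norm B (run_alg B U Orc \<psi>0 (Suc k)) \<le> state_norm B (apply_op B Orc (run_alg B U Orc \<psi>0 k))"
    using U Suc.prems by (simp add: contraction_on_def)
  also have "\<dots> \<le> state_norm B (run_alg B U Orc \<psi>0 k)"
    using contr by (simp add: contraction_on_def)
  also have "\<dots> \<le> state_norm B \<psi>0"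
    using Suc by simp
  finally show ?case .
qed

lemma hybrid_distance:
  assumes U: "\<forall>k\<le>T. contraction_on B (U k)" and contr: "contraction_on B Orc'" and "k \<le> T"
  shows "state_norm B (\<lambda>b. run_alg B U Orc' \<psi>0 k b - run_alg B U Orc \<psi>0 k b)
           \<le> (\<Sum>j<k. state_norm B (\<lambda>b. apply_op B Orc' (run_alg B U Orc \<psi>0 j) b
                                        - apply_op B Orc (run_alg B U Orc \<psi>0 j) b))"
  using assms(3)
proof (induction k)
  case 0
  then show ?case by (simp add: state_norm_def L2_set_def)
next
  case (Suc k)
  let ?\<chi> = "run_alg B U Orc' \<psi>0 k" and ?\<phi> = "run_alg B U Orc \<psi>0 k"
  have "state_norm B (\<lambda>b. run_alg B U Orc' \<psi>0 (Suc k) b - run_alg B U Orc \<psi>0 (Suc k) b)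
      = state_norm B (apply_op B (U (Suc k)) (\<lambda>b. apply_op B Orc' ?\<chi> b - apply_op B Orc ?\<phi> b))"
    by (simp add: apply_op_diff)
  also have "\<dots> \<le> state_norm B (\<lambda>b. apply_op B Orc' ?\<chi> b - apply_op B Orc ?\<phi> b)"
    using U Suc.prems by (simp add: contraction_on_def)
  also have "\<dots> = state_norm B (\<lambda>b. (apply_op B Orc' ?\<chi> b - apply_op B Orc' ?\<phi> b)
                                    + (apply_op B Orc' ?\<phi> b - apply_op B Orc ?\<phi> b))"
    by simp
  also have "\<dots> \<le> state_norm B (\<lambda>b. apply_op B Orc' ?\<chi> b - apply_op B Orc' ?\<phi> b)
                  + state_norm B (\<lambda>b. apply_op B Orc' ?\<phi> b - apply_op B Orc ?\<phi> b)"
    by (rule state_norm_triangle)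
  also have "state_norm B (\<lambda>b. apply_op B Orc' ?\<chi> b - apply_op B Orc' ?\<phi> b) \<le> state_norm B (\<lambda>b. ?\<chi> b - ?\<phi> b)"
    using contr unfolding contraction_on_def apply_op_diff[symmetric] by blast
  also have "state_norm B (\<lambda>b. ?\<chi> b - ?\<phi> b)
      \<le> (\<Sum>j<k. state_norm B (\<lambda>b. apply_op B Orc' (run_alg B U Orc \<psi>0 j) b
                                  - apply_op B Orc (run_alg B U Orc \<psi>0 j) b))"
    using Suc by simp
  finally show ?case by simp
qed

lemma oracle_zero_apply:
  assumes "i \<in> query_basis M m d" "finite M"
  shows "apply_op (query_basis M m d) (oracle_mat m (\<lambda>_. 0)) \<psi> i = \<psi> i"
proof -
  have "m > 0" using assms(1) by (auto simp: query_basis_def)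
  then show ?thesis
    using oracle_apply[OF assms(1) _ assms(2)] oracle_unstep_fixed[OF assms(1)] by simp
qed

lemma query_distance_bound:
  fixes \<psi>0 :: "'m \<times> nat \<times> nat \<Rightarrow> complex"
  assumes fin: "finite M" and fm: "\<forall>x\<in>M. f x < m"
    and U: "\<forall>k\<le>T. contraction_on (query_basis M m d) (U k)"
  shows "(state_norm (query_basis M m d)
            (\<lambda>b. run_alg (query_basis M m d) U (oracle_mat m f) \<psi>0 T b
                 - run_alg (query_basis M m d) U (oracle_mat m (\<lambda>_. 0)) \<psi>0 T b))\<^sup>2
         \<le> 4 * real T * (\<Sum>k<T. query_weight (query_basis M m d) {x. f x \<noteq> 0}
                                  (run_alg (query_basis M m d) U (oracle_mat m (\<lambda>_. 0)) \<psi>0 k))"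
proof -
  define B where "B = query_basis M m d"
  define \<phi> where "\<phi> = run_alg B U (oracle_mat m (\<lambda>_. 0)) \<psi>0"
  define \<chi> where "\<chi> = run_alg B U (oracle_mat m f) \<psi>0 T"
  define E where "E k = state_norm B (\<lambda>b. apply_op B (oracle_mat m f) (\<phi> k) b - \<phi> k b)" for k
  have "state_norm B (\<lambda>b. \<chi> b - \<phi> T b)
      \<le> (\<Sum>k<T. state_norm B (\<lambda>b. apply_op B (oracle_mat m f) (\<phi> k) b
                                  - apply_op B (oracle_mat m (\<lambda>_. 0)) (\<phi> k) b))"
    unfolding \<phi>_def \<chi>_def B_def using hybrid_distance[OF U oracle_contraction[OF fin fm]] by simp
  also have "\<dots> = (\<Sum>k<T. E k)"
    unfolding E_def B_def using oracle_zero_apply[OF _ fin] by (intro sum.cong refl state_norm_cong) simp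
  finally have "(state_norm B (\<lambda>b. \<chi> b - \<phi> T b))\<^sup>2 \<le> (\<Sum>k<T. E k)\<^sup>2"
    by (intro power_mono state_norm_nonneg)
  also have "\<dots> \<le> (\<Sum>k<T. (E k)\<^sup>2) * real T"
    using sum_squared_le_sum_of_squares[of E "{..<T}"] by simp
  also have "\<dots> \<le> (\<Sum>k<T. 4 * query_weight B {x. f x \<noteq> 0} (\<phi> k)) * real T"
    unfolding E_def B_def by (intro mult_right_mono sum_mono oracle_displacement[OF fin fm]) simp_all
  finally show ?thesis
    by (simp add: sum_distrib_left mult_ac B_def \<phi>_def \<chi>_def)
qed

lemma success_prob_perturb:
  assumes "finite B"
  shows "success_prob B out H \<chi> \<le> 2 * (state_norm B (\<lambda>b. \<chi> b - \<phi> b))\<^sup>2 + 2 * success_prob B out H \<phi>"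
proof -
  define S where "S = {b\<in>B. out b = H}"
  have "success_prob B out H \<chi> \<le> (\<Sum>b\<in>S. 2 * (cmod (\<chi> b - \<phi> b))\<^sup>2 + 2 * (cmod (\<phi> b))\<^sup>2)"
    unfolding success_prob_def S_def[symmetric]
    using cmod_diff_sq_le[of "\<chi> b - \<phi> b" "- \<phi> b" for b] by (intro sum_mono) simp
  also have "\<dots> = 2 * (\<Sum>b\<in>S. (cmod (\<chi> b - \<phi> b))\<^sup>2) + 2 * success_prob B out H \<phi>"
    by (simp add: sum.distrib sum_distrib_left success_prob_def S_def)
  also have "(\<Sum>b\<in>S. (cmod (\<chi> b - \<phi> b))\<^sup>2) \<le> (state_norm B (\<lambda>b. \<chi> b - \<phi> b))\<^sup>2"
    unfolding state_norm_sq S_def using assms by (intro sum_mono2) auto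
  finally show ?thesis by simp
qed

text \<open>Outputs for distinct answers are disjoint events, so their probabilities sum to at
  most the squared norm.\<close>
lemma success_prob_sum_le:
  assumes "finite B" "inj_on h F" "finite F"
  shows "(\<Sum>c\<in>F. success_prob B out (h c) \<phi>) \<le> (state_norm B \<phi>)\<^sup>2"
proof -
  define S where "S = {b\<in>B. out b \<in> h ` F}"
  have "(\<Sum>c\<in>F. success_prob B out (h c) \<phi>) = (\<Sum>X\<in>h ` F. success_prob B out X \<phi>)"
    using sum.reindex[OF assms(2), of "\<lambda>X. success_prob B out X \<phi>"] by simp
  also have "\<dots> = (\<Sum>X\<in>h ` F. \<Sum>b\<in>{b\<in>S. out b = X}. (cmod (\<phi> b))\<^sup>2)"
    unfolding success_prob_def S_def by (intro sum.cong refl) auto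
  also have "\<dots> = (\<Sum>b\<in>S. (cmod (\<phi> b))\<^sup>2)"
    using assms(1,3) by (intro sum.group) (auto simp: S_def)
  also have "\<dots> \<le> (state_norm B \<phi>)\<^sup>2"
    unfolding state_norm_sq S_def using assms(1) by (intro sum_mono2) auto
  finally show ?thesis .
qed

text \<open>The element \<open>((1 - a) c, a)\<close> of \<open>H_c\<close> is the dilation by \<open>a\<close> about the centre \<open>c\<close>.\<close>
lemma (in field) aff_act_stab:
  assumes "a \<in> carrier R" "c \<in> carrier R" "x \<in> carrier R"
  shows "aff_act R ((\<one> \<ominus> a) \<otimes> c, a) x = c \<oplus> a \<otimes> (x \<ominus> c)"
  unfolding aff_act_def using assms by simp algebra

lemma (in field) orbit_stab_image:
  assumes "c \<in> carrier R" "x \<in> carrier R"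
  shows "orbit_of (aff_act R) (stab_subgroup R c) x = (\<lambda>a. c \<oplus> a \<otimes> (x \<ominus> c)) ` (carrier R - {\<zero>})"
  unfolding orbit_of_def stab_subgroup_def using aff_act_stab[OF _ assms] by (auto simp: image_iff)

text \<open>The \<open>H_c\<close>-orbits are \<open>{c}\<close> and \<open>F - {c}\<close>: dilations about \<open>c\<close> act transitively on
  the nonzero differences \<open>x - c\<close>.\<close>
lemma (in field) orbit_stab:
  assumes c: "c \<in> carrier R" and x: "x \<in> carrier R"
  shows "orbit_of (aff_act R) (stab_subgroup R c) x = (if x = c then {c} else carrier R - {c})"
proof (cases "x = c")
  case True
  have "c \<oplus> a \<otimes> (x \<ominus> c) = c" if "a \<in> carrier R" for a
    using True that c by (simp add: a_minus_def r_neg)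
  moreover have "\<one> \<in> carrier R - {\<zero>}" by simp
  ultimately show ?thesis
    unfolding orbit_stab_image[OF c x] using True by force
next
  case False
  define u where "u = x \<ominus> c"
  have u: "u \<in> carrier R" "u \<noteq> \<zero>" "u \<in> Units R"
    using x c False field_Units by (auto simp: u_def)
  have "(\<lambda>a. c \<oplus> a \<otimes> u) ` (carrier R - {\<zero>}) = carrier R - {c}"
  proof (intro equalityI subsetI)
    fix y assume "y \<in> (\<lambda>a. c \<oplus> a \<otimes> u) ` (carrier R - {\<zero>})"
    then obtain a where a: "a \<in> carrier R" "a \<noteq> \<zero>" and y: "y = c \<oplus> a \<otimes> u" by auto
    have "y \<ominus> c = a \<otimes> u" using y a u c by simp algebra
    moreover have "a \<otimes> u \<noteq> \<zero>" using a u integral by blast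
    ultimately show "y \<in> carrier R - {c}" using y a u c by auto
  next
    fix y assume y: "y \<in> carrier R - {c}"
    define a where "a = (y \<ominus> c) \<otimes> inv u"
    have a: "a \<in> carrier R" using u y c by (simp add: a_def)
    have au: "a \<otimes> u = y \<ominus> c" using u y c by (simp add: a_def m_assoc)
    then have "c \<oplus> a \<otimes> u = y" using y c by simp algebra
    moreover have "a \<noteq> \<zero>"
    proof
      assume "a = \<zero>"
      then have "y \<ominus> c = \<zero>" using au u by simp
      then show False using y c by simp
    qed
    ultimately show "y \<in> (\<lambda>a. c \<oplus> a \<otimes> u) ` (carrier R - {\<zero>})" using a by force
  qed
  then show ?thesis
    unfolding orbit_stab_image[OF c x] u_def[symmetric] using False by simp
qed

lemma (in field) indicator_hides_stab:
  assumes "c \<in> carrier R"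
  shows "hides_by_symmetries (aff_act R) (carrier R) (stab_subgroup R c) (\<lambda>x. if x = c then (1::nat) else 0)"
  unfolding hides_by_symmetries_def using assms by (auto simp: orbit_stab)

text \<open>Different points have different stabilisers as soon as the field has a scalar
  \<open>a \<notin> {0, 1}\<close>.\<close>
lemma (in field) stab_subgroup_inj:
  assumes "3 \<le> card (carrier R)"
  shows "inj_on (stab_subgroup R) (carrier R)"
proof (rule inj_onI)
  fix c c' assume c: "c \<in> carrier R" and c': "c' \<in> carrier R"
    and eq: "stab_subgroup R c = stab_subgroup R c'"
  have "\<not> carrier R \<subseteq> {\<zero>, \<one>}"
  proof
    assume "carrier R \<subseteq> {\<zero>, \<one>}"
    then have "card (carrier R) \<le> card {\<zero>, \<one>}" by (intro card_mono) auto
    also have "\<dots> \<le> 2" by (simp add: card_insert_if)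
    finally show False using assms by simp
  qed
  then obtain a where a: "a \<in> carrier R" "a \<noteq> \<zero>" "a \<noteq> \<one>" by blast
  have "((\<one> \<ominus> a) \<otimes> c, a) \<in> stab_subgroup R c"
    unfolding stab_subgroup_def using a by auto
  then have "((\<one> \<ominus> a) \<otimes> c, a) \<in> stab_subgroup R c'"
    using eq by simp
  then have "(\<one> \<ominus> a) \<otimes> c = (\<one> \<ominus> a) \<otimes> c'"
    unfolding stab_subgroup_def by blast
  moreover have "\<one> \<ominus> a \<in> carrier R - {\<zero>}" using a by auto
  ultimately show "c = c'" using m_lcancel c c' by blast
qed

lemma affine_hssp_query_inequality:
  fixes R :: "('a, 'z) ring_scheme"
  assumes fld: "field R" and fin: "finite (carrier R)" and q3: "3 \<le> card (carrier R)" and m2: "2 \<le> m"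
    and sol: "solves_hssp_quantum (aff_act R) (carrier R) (stab_family R) m T"
  shows "2/3 * real (card (carrier R)) \<le> 8 * (real T)\<^sup>2 + 2"
proof -
  interpret field R by (rule fld)
  let ?F = "carrier R"
  obtain d U \<psi>0 out where
    unit: "\<forall>k\<le>T. unitary_on (query_basis ?F m d) (U k)" and
    init: "(\<Sum>b\<in>query_basis ?F m d. (cmod (\<psi>0 b))\<^sup>2) = 1" and
    succ: "\<forall>H\<in>stab_family R. \<forall>f :: 'a \<Rightarrow> nat. (\<forall>x\<in>?F. f x < m) \<longrightarrow>
              hides_by_symmetries (aff_act R) ?F H f \<longrightarrow>
              success_prob (query_basis ?F m d) out H
                (run_alg (query_basis ?F m d) U (oracle_mat m f) \<psi>0 T) \<ge> 2/3"
    using sol unfolding solves_hssp_quantum_def by blast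
  define B where "B = query_basis ?F m d"
  define \<phi> where "\<phi> = run_alg B U (oracle_mat m (\<lambda>_. 0)) \<psi>0"
  define ind where "ind c = (\<lambda>x. if x = c then 1::nat else 0)" for c :: 'a
  have finB: "finite B" using fin by (simp add: B_def query_basis_def)
  have U: "\<forall>k\<le>T. contraction_on B (U k)"
    using unit unitary_contraction[OF finB] by (simp add: B_def)
  have ind_lt: "\<forall>x\<in>?F. ind c x < m" for c using m2 by (simp add: ind_def)
  have \<phi>_norm: "(state_norm B (\<phi> k))\<^sup>2 \<le> 1" if "k \<le> T" for k
  proof -
    have "state_norm B (\<phi> k) \<le> state_norm B \<psi>0"
      unfolding \<phi>_def B_def using m2 that
      by (intro run_alg_norm[OF U[unfolded B_def]] oracle_contraction[OF fin]) auto
    moreover have "state_norm B \<psi>0 = 1"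
      using init by (simp add: state_norm_def L2_set_def B_def)
    ultimately show ?thesis by (intro power_le_one state_norm_nonneg) simp
  qed
  have per_point: "2/3 \<le> 8 * real T * (\<Sum>k<T. query_weight B {c} (\<phi> k))
                         + 2 * success_prob B out (stab_subgroup R c) (\<phi> T)"
    if c: "c \<in> ?F" for c
  proof -
    let ?\<chi> = "run_alg B U (oracle_mat m (ind c)) \<psi>0 T"
    have support: "{x. ind c x \<noteq> 0} = {c}" by (auto simp: ind_def)
    have "2/3 \<le> success_prob B out (stab_subgroup R c) ?\<chi>"
      using succ c ind_lt indicator_hides_stab[OF c] by (auto simp: stab_family_def B_def ind_def)
    also have "\<dots> \<le> 2 * (state_norm B (\<lambda>b. ?\<chi> b - \<phi> T b))\<^sup>2 + 2 * success_prob B out (stab_subgroup R c) (\<phi> T)"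
      by (rule success_prob_perturb[OF finB])
    also have "(state_norm B (\<lambda>b. ?\<chi> b - \<phi> T b))\<^sup>2 \<le> 4 * real T * (\<Sum>k<T. query_weight B {c} (\<phi> k))"
      using query_distance_bound[OF fin ind_lt[of c] U[unfolded B_def], of \<psi>0]
      unfolding support B_def \<phi>_def .
    finally show ?thesis by simp
  qed
  have weights: "(\<Sum>c\<in>?F. query_weight B {c} (\<phi> k)) \<le> 1" if "k \<le> T" for k
    using query_weight_sum[OF fin] \<phi>_norm[OF that] by (simp add: B_def)
  have outcomes: "(\<Sum>c\<in>?F. success_prob B out (stab_subgroup R c) (\<phi> T)) \<le> 1"
    using order_trans[OF success_prob_sum_le[OF finB stab_subgroup_inj[OF q3] fin] \<phi>_norm[of T]] by simp
  have "2/3 * real (card ?F) = (\<Sum>c\<in>?F. 2/3)"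
    by simp
  also have "\<dots> \<le> (\<Sum>c\<in>?F. 8 * real T * (\<Sum>k<T. query_weight B {c} (\<phi> k))
                            + 2 * success_prob B out (stab_subgroup R c) (\<phi> T))"
    by (intro sum_mono per_point)
  also have "\<dots> = 8 * real T * (\<Sum>k<T. \<Sum>c\<in>?F. query_weight B {c} (\<phi> k))
                  + 2 * (\<Sum>c\<in>?F. success_prob B out (stab_subgroup R c) (\<phi> T))"
    by (simp add: sum.distrib sum_distrib_left sum.swap[of _ ?F "{..<T}"])
  also have "\<dots> \<le> 8 * real T * (\<Sum>k<T. 1) + 2 * 1"
    using weights outcomes by (intro add_mono mult_left_mono sum_mono) auto
  finally show ?thesis by (simp add: power2_eq_square)
qed

theorem proposition1:
  "\<exists>C>0. \<exists>N::nat. \<forall>(R :: nat ring) (m::nat) (T::nat).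
      field R \<longrightarrow> finite (carrier R) \<longrightarrow> card (carrier R) \<ge> N \<longrightarrow> m \<ge> 2 \<longrightarrow>
      solves_hssp_quantum (aff_act R) (carrier R) (stab_family R) m T \<longrightarrow>
      real T \<ge> C * sqrt (real (card (carrier R)))"
proof (intro exI[of _ "1/5"] conjI exI[of _ "6::nat"] allI impI)
  fix R :: "nat ring" and m T :: nat
  assume "field R" "finite (carrier R)" "card (carrier R) \<ge> 6" "m \<ge> 2"
    "solves_hssp_quantum (aff_act R) (carrier R) (stab_family R) m T"
  then have "2/3 * real (card (carrier R)) \<le> 8 * (real T)\<^sup>2 + 2"
    by (intro affine_hssp_query_inequality) auto
  with \<open>card (carrier R) \<ge> 6\<close> have "sqrt (real (card (carrier R)) / 25) \<le> sqrt ((real T)\<^sup>2)"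
    by (intro real_sqrt_le_mono) simp
  then show "1/5 * sqrt (real (card (carrier R))) \<le> real T"
    by (simp add: real_sqrt_divide)
qed simp

end
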